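(* The lifts $\Delta_C$ of the strongly connected components $C$ of $G$ are Morse sets for the flow $\psi$ on $\Delta$; that is, the collection $\{\Delta_C : C \text{ a strongly connected component of } G\}$ consists of non-void, pairwise disjoint, invariant, isolated, compact sets and there are no cycles between them (so that it is a Morse decomposition of $(\Delta,\psi)$).
   Context: $G$ is a finite directed graph (loops allowed) with vertex set $V$. $\Omega$ is the set of bi-infinite paths in $G$, i.e. sequences $(x_i)_{i\in\mathbb Z}\in V^{\mathbb Z}$ such that for every $i$ there is an edge from $x_i$ to $x_{i+1}$. Fix $h>0$. $\bar\Delta$ is the set of functions $x:\mathbb R\to V$ that are constant on each interval $[nh,(n+1)h)$, $n\in\mathbb Z$, and satisfy $(x(ih))_{i\in\mathbb Z}\in\Omega$. $\Delta=\{x(\cdot+t): x\in\bar\Delta,\ t\in\mathbb R\}$, with metric $d(x,y)=\sum_{i\in\mathbb Z}4^{-|i|}\frac1h\int_{ih}^{(i+1)h}\delta(x,y,t)\,dt$, where $\delta(x,y,t)=1$ if $x(t)\ne y(t)$ and $0$ otherwise. The flow $\psi:\mathbb R\times\Delta\to\Delta$ is $\psi(t,x)=x(\cdot+t)$. A strongly connected component of $G$ is a maximal nonempty set $C\subseteq V$ such that for all $u,v\in C$ (including $u=v$) there is a directed path of positive length from $u$ to $v$ with all vertices in $C$. The lift of $C$ is $\Delta_C=\{f\in\Delta: f(t)\in C \text{ for all } t\in\mathbb R\}$. For $x\in\Delta$, $\omega(x)$ (resp. $\alpha(x)$) is the set of limits of $\psi(t_k,x)$ along sequences $t_k\to+\infty$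 (resp. $t_k\to-\infty$). A set $K$ is invariant if $\psi(t,K)\subseteq K$ for all $t\in\mathbb R$; isolated if there is a neighborhood $N$ of $K$ with $K\subset\operatorname{int}N$ such that $\psi(t,x)\in N$ for all $t\in\mathbb R$ implies $x\in K$. A Morse decomposition is a finite collection $\{\mathcal M_1,\dots,\mathcal M_n\}$ of non-void, pairwise disjoint, invariant, isolated, compact sets such that (1) $\omega(x),\alpha(x)\subseteq\bigcup_i\mathcal M_i$ for every $x$, and (2) (no cycles) if there are Morse sets $\mathcal M_{j_0},\dots,\mathcal M_{j_l}$ and points $x_1,\dots,x_l\notin\bigcup_i\mathcal M_i$ with $\alpha(x_m)\subseteq\mathcal M_{j_{m-1}}$ and $\omega(x_m)\subseteq\mathcal M_{j_m}$ for $m=1,\dots,l$, then $\mathcal M_{j_0}\ne\mathcal M_{j_l}$. *)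

theory Defs
  imports "HOL-Analysis.Analysis"
begin

definition Omega :: "'v set \<Rightarrow> ('v \<times> 'v) set \<Rightarrow> (int \<Rightarrow> 'v) set" where
  "Omega V E = {x. \<forall>i::int. x i \<in> V \<and> (x i, x (i + 1)) \<in> E}"

definition Deltabar :: "'v set \<Rightarrow> ('v \<times> 'v) set \<Rightarrow> real \<Rightarrow> (real \<Rightarrow> 'v) set" where
  "Deltabar V E h = {x. (\<forall>n::int. \<forall>t. of_int n * h \<le> t \<and> t < (of_int n + 1) * h \<longrightarrow> x t = x (of_int n * h))
                        \<and> (\<lambda>i::int. x (of_int i * h)) \<in> Omega V E}"

definition Delta :: "'v set \<Rightarrow> ('v \<times> 'v) set \<Rightarrow> real \<Rightarrow> (real \<Rightarrow> 'v) set" where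
  "Delta V E h = {(\<lambda>s. x (s + t)) | x t. x \<in> Deltabar V E h}"

definition flowdist :: "real \<Rightarrow> (real \<Rightarrow> 'v) \<Rightarrow> (real \<Rightarrow> 'v) \<Rightarrow> real" where
  "flowdist h x y = (\<Sum>\<^sub>\<infinity>i::int. (1 / 4) ^ nat \<bar>i\<bar> * ((1 / h) *
       integral {of_int i * h .. (of_int i + 1) * h} (\<lambda>t. if x t \<noteq> y t then 1 else 0)))"

definition psi :: "real \<Rightarrow> (real \<Rightarrow> 'v) \<Rightarrow> (real \<Rightarrow> 'v)" where
  "psi t x = (\<lambda>s. x (s + t))"

definition flowtop :: "'v set \<Rightarrow> ('v \<times> 'v) set \<Rightarrow> real \<Rightarrow> (real \<Rightarrow> 'v) topology" where
  "flowtop V E h = Metric_space.mtopology (Delta V E h) (flowdist h)"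

definition strongly_connected_set :: "('v \<times> 'v) set \<Rightarrow> 'v set \<Rightarrow> bool" where
  "strongly_connected_set E C \<longleftrightarrow> C \<noteq> {} \<and> (\<forall>u\<in>C. \<forall>v\<in>C. (u, v) \<in> (E \<inter> (C \<times> C))\<^sup>+)"

definition scc :: "'v set \<Rightarrow> ('v \<times> 'v) set \<Rightarrow> 'v set \<Rightarrow> bool" where
  "scc V E C \<longleftrightarrow> C \<subseteq> V \<and> strongly_connected_set E C \<and>
     (\<forall>C'. C \<subseteq> C' \<and> C' \<subseteq> V \<and> strongly_connected_set E C' \<longrightarrow> C' = C)"

definition lift :: "'v set \<Rightarrow> ('v \<times> 'v) set \<Rightarrow> real \<Rightarrow> 'v set \<Rightarrow> (real \<Rightarrow> 'v) set" where
  "lift V E h C = {f \<in> Delta V E h. \<forall>t. f t \<in> C}"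

definition omega_lim :: "'v set \<Rightarrow> ('v \<times> 'v) set \<Rightarrow> real \<Rightarrow> (real \<Rightarrow> 'v) \<Rightarrow> (real \<Rightarrow> 'v) set" where
  "omega_lim V E h x = {y. \<exists>tk::nat \<Rightarrow> real. filterlim tk at_top sequentially \<and>
      limitin (flowtop V E h) (\<lambda>k. psi (tk k) x) y sequentially}"

definition alpha_lim :: "'v set \<Rightarrow> ('v \<times> 'v) set \<Rightarrow> real \<Rightarrow> (real \<Rightarrow> 'v) \<Rightarrow> (real \<Rightarrow> 'v) set" where
  "alpha_lim V E h x = {y. \<exists>tk::nat \<Rightarrow> real. filterlim tk at_bot sequentially \<and>
      limitin (flowtop V E h) (\<lambda>k. psi (tk k) x) y sequentially}"

definition invariant :: "(real \<Rightarrow> 'v) set \<Rightarrow> bool" where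
  "invariant K \<longleftrightarrow> (\<forall>t. \<forall>x\<in>K. psi t x \<in> K)"

definition isolated :: "'v set \<Rightarrow> ('v \<times> 'v) set \<Rightarrow> real \<Rightarrow> (real \<Rightarrow> 'v) set \<Rightarrow> bool" where
  "isolated V E h K \<longleftrightarrow> (\<exists>N. N \<subseteq> Delta V E h \<and> K \<subseteq> (flowtop V E h) interior_of N \<and>
      (\<forall>x \<in> Delta V E h. (\<forall>t. psi t x \<in> N) \<longrightarrow> x \<in> K))"

definition morse_decomposition :: "'v set \<Rightarrow> ('v \<times> 'v) set \<Rightarrow> real \<Rightarrow> (real \<Rightarrow> 'v) set set \<Rightarrow> bool" where
  "morse_decomposition V E h \<M> \<longleftrightarrow>
     finite \<M> \<and>
     (\<forall>K\<in>\<M>. K \<noteq> {} \<and> K \<subseteq> Delta V E h \<and> invariant K \<and> isolated V E h K \<and> compactin (flowtop V E h) K) \<and>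
     (\<forall>K\<in>\<M>. \<forall>K'\<in>\<M>. K \<noteq> K' \<longrightarrow> K \<inter> K' = {}) \<and>
     (\<forall>x \<in> Delta V E h. omega_lim V E h x \<subseteq> \<Union>\<M> \<and> alpha_lim V E h x \<subseteq> \<Union>\<M>) \<and>
     (\<forall>l::nat. \<forall>j::nat \<Rightarrow> (real \<Rightarrow> 'v) set. \<forall>x::nat \<Rightarrow> (real \<Rightarrow> 'v).
        l \<ge> 1 \<and> (\<forall>m\<le>l. j m \<in> \<M>) \<and>
        (\<forall>m\<in>{1..l}. x m \<in> Delta V E h \<and> x m \<notin> \<Union>\<M> \<and>
            alpha_lim V E h (x m) \<subseteq> j (m - 1) \<and> omega_lim V E h (x m) \<subseteq> j m)
        \<longrightarrow> j 0 \<noteq> j l)"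

end

theory Submission
  imports Defs
begin

text \<open>Every point of \<open>\<Delta>\<close> is a step function \<open>u \<mapsto> w \<lfloor>(u + c) / h\<rfloor>\<close> with \<open>w \<in> \<Omega>\<close>, and the metric
  weights disagreement on the cell \<open>[ih, (i+1)h]\<close> by \<open>4 ^ -|i|\<close>. Hence the lift of a component \<open>C\<close> is the
  continuous image of the compact space \<open>\<Omega>\<^sub>C \<times> [0, h]\<close>, and it is isolated by its unit neighbourhood,
  because distance \<open>< 1\<close> forces agreement on the cell \<open>[0, h)\<close>. Every value of a point in the
  \<open>\<omega>\<close>-limit set of the orbit of \<open>w\<close> is visited by \<open>w\<close> infinitely often in forward time; these
  vertices form a strongly connected set, so the \<open>\<omega>\<close>-limit set lies in the lift of one component, and
  likewise for \<open>\<alpha>\<close>. An orbit outside all lifts therefore runs from its \<open>\<alpha>\<close>-component to a different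
  \<open>\<omega>\<close>-component reachable from it, and reachability between distinct components has no cycles.\<close>

section \<open>Strongly connected components\<close>

definition scc_of :: "('v \<times> 'v) set \<Rightarrow> 'v \<Rightarrow> 'v set" where
  "scc_of E r = {w. (r, w) \<in> E\<^sup>+ \<and> (w, r) \<in> E\<^sup>+}"

lemma trancl_restrict_scc_of:
  assumes "(a, b) \<in> E\<^sup>+" "a \<in> scc_of E r" "(b, r) \<in> E\<^sup>+"
  shows "(a, b) \<in> (E \<inter> scc_of E r \<times> scc_of E r)\<^sup>+"
  using assms
proof (induction rule: trancl_induct)
  case (base y)
  then have "y \<in> scc_of E r" unfolding scc_of_def by (auto intro: trancl_into_trancl)
  then show ?case using base by auto
next
  case (step y z)
  have ry: "(r, y) \<in> E\<^sup>+" using step.prems(1) step.hyps(1) unfolding scc_of_def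
    by (blast intro: trancl_trans)
  have yr: "(y, r) \<in> E\<^sup>+" using step.hyps(2) step.prems(2) by auto
  have "y \<in> scc_of E r" "z \<in> scc_of E r"
    using ry yr step.hyps(2) step.prems(2) unfolding scc_of_def by (auto intro: trancl_into_trancl)
  then show ?case using step.IH[OF step.prems(1) yr] step.hyps(2)
    by (blast intro: trancl_into_trancl)
qed

lemma strongly_connected_scc_of:
  assumes "(r, r) \<in> E\<^sup>+"
  shows "strongly_connected_set E (scc_of E r)" "r \<in> scc_of E r"
proof -
  show r: "r \<in> scc_of E r" using assms by (simp add: scc_of_def)
  show "strongly_connected_set E (scc_of E r)"
    unfolding strongly_connected_set_def
  proof (intro conjI ballI)
    show "scc_of E r \<noteq> {}" using r by auto
    fix u v assume u: "u \<in> scc_of E r" and v: "v \<in> scc_of E r"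
    then have "(u, v) \<in> E\<^sup>+" "(v, r) \<in> E\<^sup>+" unfolding scc_of_def by (auto intro: trancl_trans)
    then show "(u, v) \<in> (E \<inter> scc_of E r \<times> scc_of E r)\<^sup>+"
      by (rule trancl_restrict_scc_of[OF _ u])
  qed
qed

lemma strongly_connected_set_trancl:
  assumes "strongly_connected_set E S" "u \<in> S" "v \<in> S"
  shows "(u, v) \<in> E\<^sup>+"
proof -
  have "(u, v) \<in> (E \<inter> S \<times> S)\<^sup>+" using assms unfolding strongly_connected_set_def by blast
  then show ?thesis by (rule trancl_mono) auto
qed

lemma strongly_connected_set_subset:
  assumes "E \<subseteq> V \<times> V" "strongly_connected_set E S"
  shows "S \<subseteq> V"
proof
  fix u assume "u \<in> S"
  then have "(u, u) \<in> E\<^sup>+" using strongly_connected_set_trancl[OF assms(2)] by blast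
  then obtain w where "(u, w) \<in> E" by (rule converse_tranclE) auto
  then show "u \<in> V" using assms(1) by auto
qed

lemma strongly_connected_set_Un:
  assumes "strongly_connected_set E S" "strongly_connected_set E T" "S \<inter> T \<noteq> {}"
  shows "strongly_connected_set E (S \<union> T)"
  unfolding strongly_connected_set_def
proof (intro conjI ballI)
  show "S \<union> T \<noteq> {}" using assms(3) by auto
  obtain c where c: "c \<in> S" "c \<in> T" using assms(3) by auto
  have into_Un: "(a, b) \<in> (E \<inter> (S \<union> T) \<times> (S \<union> T))\<^sup>+"
    if "strongly_connected_set E R" "R \<subseteq> S \<union> T" "a \<in> R" "b \<in> R" for R a b
  proof -
    have "(a, b) \<in> (E \<inter> R \<times> R)\<^sup>+" using that unfolding strongly_connected_set_def by blast
    then show ?thesis by (rule trancl_mono) (use that(2) in auto)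
  qed
  fix u v assume "u \<in> S \<union> T" "v \<in> S \<union> T"
  then have "(u, c) \<in> (E \<inter> (S \<union> T) \<times> (S \<union> T))\<^sup>+" "(c, v) \<in> (E \<inter> (S \<union> T) \<times> (S \<union> T))\<^sup>+"
    using into_Un[OF assms(1)] into_Un[OF assms(2)] c by blast+
  then show "(u, v) \<in> (E \<inter> (S \<union> T) \<times> (S \<union> T))\<^sup>+" by (rule trancl_trans)
qed

lemma strongly_connected_set_converse:
  "strongly_connected_set (E\<inverse>) S \<longleftrightarrow> strongly_connected_set E S"
proof -
  have "E\<inverse> \<inter> S \<times> S = (E \<inter> S \<times> S)\<inverse>" by auto
  then show ?thesis unfolding strongly_connected_set_def by (auto simp: trancl_converse)
qed

lemma scc_absorbs:
  assumes "E \<subseteq> V \<times> V" "scc V E C" "strongly_connected_set E S" "S \<inter> C \<noteq> {}"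
  shows "S \<subseteq> C"
proof -
  have C: "C \<subseteq> V" "strongly_connected_set E C"
    and maximal: "\<And>C'. C \<subseteq> C' \<Longrightarrow> C' \<subseteq> V \<Longrightarrow> strongly_connected_set E C' \<Longrightarrow> C' = C"
    using assms(2) unfolding scc_def by auto
  have "strongly_connected_set E (C \<union> S)"
    using strongly_connected_set_Un[OF C(2) assms(3)] assms(4) by (simp add: Int_commute)
  moreover have "C \<union> S \<subseteq> V" using strongly_connected_set_subset[OF assms(1,3)] C(1) by simp
  ultimately have "C \<union> S = C" using maximal by simp
  then show ?thesis by blast
qed

lemma scc_eq:
  assumes "E \<subseteq> V \<times> V" "scc V E C" "scc V E D" "C \<inter> D \<noteq> {}"
  shows "C = D"
proof
  show "C \<subseteq> D" using scc_absorbs[OF assms(1,3)] assms(2,4) unfolding scc_def by blast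
  show "D \<subseteq> C" using scc_absorbs[OF assms(1,2)] assms(3,4) unfolding scc_def by blast
qed

lemma strongly_connected_set_in_scc:
  assumes "E \<subseteq> V \<times> V" "strongly_connected_set E S"
  obtains C where "scc V E C" "S \<subseteq> C"
proof -
  obtain r where r: "r \<in> S" using assms(2) unfolding strongly_connected_set_def by auto
  have rr: "(r, r) \<in> E\<^sup>+" using strongly_connected_set_trancl[OF assms(2) r r] .
  note sc = strongly_connected_scc_of[OF rr]
  have contains: "S' \<subseteq> scc_of E r" if "strongly_connected_set E S'" "r \<in> S'" for S'
    using strongly_connected_set_trancl[OF that(1) that(2)]
      strongly_connected_set_trancl[OF that(1) _ that(2)] unfolding scc_of_def by blast
  have "scc V E (scc_of E r)"
    unfolding scc_def
    using sc strongly_connected_set_subset[OF assms(1) sc(1)] contains by blast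
  moreover have "S \<subseteq> scc_of E r" using contains assms(2) r .
  ultimately show ?thesis using that by blast
qed

lemma scc_path_closed:
  assumes "E \<subseteq> V \<times> V" "scc V E C" "c \<in> C" "c' \<in> C" "(c, v) \<in> E\<^sup>*" "(v, c') \<in> E\<^sup>*"
  shows "v \<in> C"
proof -
  have sc: "strongly_connected_set E C" using assms(2) unfolding scc_def by auto
  have cc: "(c, c) \<in> E\<^sup>+" "(c', c) \<in> E\<^sup>+" using strongly_connected_set_trancl[OF sc] assms(3,4) by auto
  have "(c, v) \<in> E\<^sup>+" using assms(5) cc(1) by (cases "c = v") (auto simp: rtrancl_eq_or_trancl)
  moreover have "(v, c) \<in> E\<^sup>+" using assms(6) cc(2) by (rule rtrancl_trancl_trancl)
  ultimately have "v \<in> scc_of E c" unfolding scc_of_def by auto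
  moreover have "scc_of E c \<subseteq> C"
    using scc_absorbs[OF assms(1,2) strongly_connected_scc_of(1)[OF cc(1)]]
      strongly_connected_scc_of(2)[OF cc(1)] assms(3) by blast
  ultimately show ?thesis by blast
qed

definition reaches :: "('v \<times> 'v) set \<Rightarrow> 'v set \<Rightarrow> 'v set \<Rightarrow> bool" where
  "reaches E A B \<longleftrightarrow> (\<exists>a\<in>A. \<exists>b\<in>B. (a, b) \<in> E\<^sup>*)"

lemma reaches_trans:
  assumes "scc V E B" "reaches E A B" "reaches E B C"
  shows "reaches E A C"
proof -
  obtain a b where ab: "a \<in> A" "b \<in> B" "(a, b) \<in> E\<^sup>*" using assms(2) unfolding reaches_def by blast
  obtain b' c where bc: "b' \<in> B" "c \<in> C" "(b', c) \<in> E\<^sup>*" using assms(3) unfolding reaches_def by blast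
  have "strongly_connected_set E B" using assms(1) unfolding scc_def by blast
  then have "(b, b') \<in> E\<^sup>+" using ab(2) bc(1) by (rule strongly_connected_set_trancl)
  then have "(a, c) \<in> E\<^sup>*" using ab(3) bc(3) by (meson rtrancl_trans trancl_into_rtrancl)
  then show ?thesis unfolding reaches_def using ab(1) bc(2) by blast
qed

lemma scc_reaches_antisym:
  assumes "E \<subseteq> V \<times> V" "scc V E C" "scc V E D" "reaches E C D" "reaches E D C"
  shows "C = D"
proof -
  obtain a b where ab: "a \<in> C" "b \<in> D" "(a, b) \<in> E\<^sup>*" using assms(4) unfolding reaches_def by blast
  obtain b' a' where ba: "b' \<in> D" "a' \<in> C" "(b', a') \<in> E\<^sup>*" using assms(5) unfolding reaches_def by blast
  have "strongly_connected_set E D" using assms(3) unfolding scc_def by blast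
  then have "(b, b') \<in> E\<^sup>+" using ab(2) ba(1) by (rule strongly_connected_set_trancl)
  then have "(b, a') \<in> E\<^sup>*" using ba(3) by (meson rtrancl_trans trancl_into_rtrancl)
  then have "b \<in> C" using scc_path_closed[OF assms(1,2) ab(1) ba(2) ab(3)] by simp
  then show ?thesis using scc_eq[OF assms(1-3)] ab(2) by blast
qed

lemma scc_chain_acyclic:
  fixes l :: nat and D :: "nat \<Rightarrow> 'v set"
  assumes "E \<subseteq> V \<times> V" "1 \<le> l" "\<And>m. m \<le> l \<Longrightarrow> scc V E (D m)"
    and "\<And>m. 1 \<le> m \<Longrightarrow> m \<le> l \<Longrightarrow> D (m - 1) \<noteq> D m \<and> reaches E (D (m - 1)) (D m)"
  shows "D 0 \<noteq> D l"
proof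
  assume cycle: "D 0 = D l"
  have "1 \<le> m \<Longrightarrow> m \<le> l \<Longrightarrow> reaches E (D 1) (D m)" for m
  proof (induction m)
    case (Suc m)
    show ?case
    proof (cases "m = 0")
      case True
      obtain a where "a \<in> D 1" using assms(3)[of 1] assms(2) unfolding scc_def strongly_connected_set_def by blast
      then show ?thesis using True unfolding reaches_def by auto
    next
      case False
      then show ?thesis
        using reaches_trans[OF assms(3)[of m]] Suc assms(4)[of "Suc m"] by simp
    qed
  qed simp
  then have "reaches E (D 1) (D 0)" using assms(2) cycle by simp
  moreover have "D 0 \<noteq> D 1" "reaches E (D 0) (D 1)" using assms(2) assms(4)[of 1] by auto
  ultimately show False using scc_reaches_antisym[OF assms(1) assms(3)[of 0] assms(3)[of 1]] assms(2) by simp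
qed

section \<open>The metric on the suspension\<close>

definition step_fun :: "real \<Rightarrow> (int \<Rightarrow> 'v) \<Rightarrow> real \<Rightarrow> real \<Rightarrow> 'v" where
  "step_fun h w c = (\<lambda>u. w \<lfloor>(u + c) / h\<rfloor>)"

definition is_step_fun :: "real \<Rightarrow> (real \<Rightarrow> 'v) \<Rightarrow> bool" where
  "is_step_fun h f \<longleftrightarrow> (\<exists>w c. f = step_fun h w c)"

definition cell :: "real \<Rightarrow> int \<Rightarrow> real set" where
  "cell h i = {of_int i * h .. (of_int i + 1) * h}"

definition disagreement :: "real \<Rightarrow> (real \<Rightarrow> 'v) \<Rightarrow> (real \<Rightarrow> 'v) \<Rightarrow> int \<Rightarrow> real" where
  "disagreement h f g i = measure lborel ({u. f u \<noteq> g u} \<inter> cell h i)"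

definition weight :: "int \<Rightarrow> real" where
  "weight i = (1 / 4) ^ nat \<bar>i\<bar>"

lemma floor_divide_eq_iff:
  assumes "h > 0"
  shows "\<lfloor>u / h\<rfloor> = n \<longleftrightarrow> of_int n * h \<le> u \<and> u < (of_int n + 1) * h"
  using assms by (simp add: floor_eq_iff pos_le_divide_eq pos_divide_less_eq)

lemma mem_Delta_iff:
  assumes "h > 0"
  shows "f \<in> Delta V E h \<longleftrightarrow> (\<exists>w c. w \<in> Omega V E \<and> f = step_fun h w c)"
proof
  assume "f \<in> Delta V E h"
  then obtain x t where f: "f = (\<lambda>s. x (s + t))" and x: "x \<in> Deltabar V E h"
    unfolding Delta_def by auto
  define w where "w = (\<lambda>i::int. x (of_int i * h))"
  have w: "w \<in> Omega V E" using x unfolding Deltabar_def w_def by auto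
  have "x u = w \<lfloor>u / h\<rfloor>" for u
    using x floor_divide_eq_iff[OF assms, of u "\<lfloor>u / h\<rfloor>"] unfolding Deltabar_def w_def by blast
  then have "f = step_fun h w t" unfolding f step_fun_def by simp
  then show "\<exists>w c. w \<in> Omega V E \<and> f = step_fun h w c" using w by blast
next
  assume "\<exists>w c. w \<in> Omega V E \<and> f = step_fun h w c"
  then obtain w c where w: "w \<in> Omega V E" and f: "f = step_fun h w c" by blast
  define x where "x = (\<lambda>u. w \<lfloor>u / h\<rfloor>)"
  have xi: "x (of_int i * h) = w i" for i :: int using assms by (simp add: x_def)
  have "x \<in> Deltabar V E h" unfolding Deltabar_def
  proof (intro CollectI conjI allI impI)
    fix n :: int and t assume "of_int n * h \<le> t \<and> t < (of_int n + 1) * h"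
    then have "\<lfloor>t / h\<rfloor> = n" using floor_divide_eq_iff[OF assms] by blast
    then show "x t = x (of_int n * h)" using xi by (simp add: x_def)
  qed (use w xi in simp)
  moreover have "f = (\<lambda>s. x (s + c))" unfolding f step_fun_def x_def by simp
  ultimately show "f \<in> Delta V E h" unfolding Delta_def by blast
qed

lemma step_fun_in_Delta: "h > 0 \<Longrightarrow> w \<in> Omega V E \<Longrightarrow> step_fun h w c \<in> Delta V E h"
  using mem_Delta_iff by blast

lemma is_step_fun_Delta: "h > 0 \<Longrightarrow> f \<in> Delta V E h \<Longrightarrow> is_step_fun h f"
  using mem_Delta_iff unfolding is_step_fun_def by blast

lemma Delta_values:
  assumes "h > 0" "f \<in> Delta V E h"
  shows "f t \<in> V"
proof -
  obtain w c where "w \<in> Omega V E" "f = step_fun h w c" using assms mem_Delta_iff by blast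
  then show ?thesis unfolding step_fun_def Omega_def by auto
qed

lemma step_fun_locally_const:
  assumes "h > 0" "is_step_fun h f"
  shows "\<exists>e>u. \<forall>t\<in>{u..<e}. f t = f u"
proof -
  obtain w c where f: "f = step_fun h w c" using assms(2) unfolding is_step_fun_def by blast
  let ?k = "\<lfloor>(u + c) / h\<rfloor>"
  define e where "e = (of_int ?k + 1) * h - c"
  have u: "of_int ?k * h \<le> u + c \<and> u + c < (of_int ?k + 1) * h"
    using floor_divide_eq_iff[OF assms(1)] by blast
  have "f t = f u" if "t \<in> {u..<e}" for t
  proof -
    have "\<lfloor>(t + c) / h\<rfloor> = ?k"
      using that u floor_divide_eq_iff[OF assms(1), of "t + c" ?k] unfolding e_def by auto
    then show ?thesis unfolding f step_fun_def by simp
  qed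
  moreover have "u < e" using u unfolding e_def by simp
  ultimately show ?thesis by blast
qed

lemma disagreement_set_borel:
  assumes "is_step_fun h f" "is_step_fun h g"
  shows "{u. f u \<noteq> g u} \<in> sets borel"
proof -
  obtain w c w' c' where f: "f = step_fun h w c" and g: "g = step_fun h w' c'"
    using assms unfolding is_step_fun_def by blast
  have "(\<lambda>u::real. (\<lfloor>(u + c) / h\<rfloor>, \<lfloor>(u + c') / h\<rfloor>))
      \<in> borel \<rightarrow>\<^sub>M count_space (UNIV::int set) \<Otimes>\<^sub>M count_space (UNIV::int set)"
    by measurable
  then have "(\<lambda>u::real. (\<lfloor>(u + c) / h\<rfloor>, \<lfloor>(u + c') / h\<rfloor>)) \<in> borel \<rightarrow>\<^sub>M count_space UNIV"
    by (simp add: pair_measure_countable)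
  then have "(\<lambda>u::real. (\<lfloor>(u + c) / h\<rfloor>, \<lfloor>(u + c') / h\<rfloor>)) -` {p. w (fst p) \<noteq> w' (snd p)}
      \<inter> space borel \<in> sets borel"
    by (rule measurable_sets) simp
  then show ?thesis by (simp add: vimage_def f g step_fun_def)
qed

lemma cell_fmeasurable: "cell h i \<in> fmeasurable lborel"
  unfolding cell_def by (metis cbox_interval fmeasurable_cbox)

lemma disagreement_fmeasurable:
  assumes "is_step_fun h f" "is_step_fun h g"
  shows "{u. f u \<noteq> g u} \<inter> cell h i \<in> fmeasurable lborel"
proof -
  have "cell h i \<inter> {u. f u \<noteq> g u} \<in> fmeasurable lborel"
    using fmeasurable_Int_fmeasurable[OF cell_fmeasurable] disagreement_set_borel[OF assms] by simp
  then show ?thesis by (simp add: Int_commute)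
qed

lemma integral_disagreement:
  assumes "is_step_fun h f" "is_step_fun h g"
  shows "integral (cell h i) (\<lambda>t. if f t \<noteq> g t then 1 else 0) = disagreement h f g i"
proof -
  let ?S = "{u. f u \<noteq> g u}"
  have "(\<lambda>t. if f t \<noteq> g t then 1 else 0) = (indicator ?S :: real \<Rightarrow> real)"
    by (auto simp: indicator_def)
  moreover have "?S \<inter> cell h i \<in> lmeasurable"
    using fmeasurable_Int_fmeasurable[of "cell h i" lebesgue ?S] disagreement_set_borel[OF assms]
    unfolding cell_def by (simp add: Int_commute)
  then have "integral (cell h i) (indicator ?S) = measure lebesgue (?S \<inter> cell h i)"
    by (rule integral_indicator)
  moreover have "?S \<inter> cell h i \<in> sets lborel"
    using disagreement_fmeasurable[OF assms] by (simp add: fmeasurable_def)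
  ultimately show ?thesis unfolding disagreement_def by simp
qed

lemma disagreement_le:
  assumes "is_step_fun h f" "is_step_fun h g" "h > 0"
  shows "disagreement h f g i \<le> h"
proof -
  have "disagreement h f g i \<le> measure lborel (cell h i)"
    unfolding disagreement_def using disagreement_fmeasurable[OF assms(1,2)] cell_fmeasurable
    by (intro measure_mono_fmeasurable) (auto simp: fmeasurable_def)
  also have "\<dots> = h" using assms(3) by (simp add: cell_def algebra_simps)
  finally show ?thesis .
qed

lemma disagreement_ge_interval:
  assumes "is_step_fun h f" "is_step_fun h g" "{a..<b} \<subseteq> {u. f u \<noteq> g u} \<inter> cell h i" "a < b"
  shows "b - a \<le> disagreement h f g i"
proof -
  have "measure lborel {a..<b} \<le> disagreement h f g i"
    unfolding disagreement_def using disagreement_fmeasurable[OF assms(1,2)] assms(3)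
    by (intro measure_mono_fmeasurable) auto
  then show ?thesis using assms(4) by simp
qed

lemma disagreement_triangle:
  assumes "is_step_fun h x" "is_step_fun h y" "is_step_fun h z"
  shows "disagreement h x z i \<le> disagreement h x y i + disagreement h y z i"
proof -
  have xy: "{u. x u \<noteq> y u} \<inter> cell h i \<in> fmeasurable lborel"
    and yz: "{u. y u \<noteq> z u} \<inter> cell h i \<in> fmeasurable lborel"
    using disagreement_fmeasurable assms by blast+
  have "disagreement h x z i
      \<le> measure lborel ({u. x u \<noteq> y u} \<inter> cell h i \<union> {u. y u \<noteq> z u} \<inter> cell h i)"
    unfolding disagreement_def using disagreement_fmeasurable[OF assms(1,3)] fmeasurable.Un[OF xy yz]
    by (intro measure_mono_fmeasurable) (auto simp: fmeasurable_def)
  also have "\<dots> \<le> disagreement h x y i + disagreement h y z i"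
    unfolding disagreement_def using xy yz by (intro measure_Un_le) (auto simp: fmeasurable_def)
  finally show ?thesis .
qed

lemma sum_power_abs_symmetric_le:
  fixes r :: real
  assumes "0 \<le> r" "r \<le> 1 / 2"
  shows "(\<Sum>i\<in>{-int N..int N}. r ^ nat \<bar>i\<bar>) \<le> 3 - 2 * r ^ N"
proof (induction N)
  case (Suc N)
  have "{-int (Suc N)..int (Suc N)} = insert (- int (Suc N)) (insert (int (Suc N)) {-int N..int N})"
    by auto
  then have "(\<Sum>i\<in>{-int (Suc N)..int (Suc N)}. r ^ nat \<bar>i\<bar>)
      = 2 * r ^ Suc N + (\<Sum>i\<in>{-int N..int N}. r ^ nat \<bar>i\<bar>)"
    by (simp del: of_nat_Suc)
  also have "\<dots> \<le> 2 * r ^ Suc N + 3 - 2 * r ^ N" using Suc by simp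
  also have "\<dots> \<le> 3 - 2 * r ^ Suc N"
    using mult_right_mono[of r "1 / 2" "r ^ N"] assms by simp
  finally show ?case .
qed simp

lemma sum_power_abs_le:
  fixes r :: real
  assumes "0 \<le> r" "r \<le> 1 / 2" "finite F"
  shows "(\<Sum>i\<in>F. r ^ nat \<bar>i\<bar>) \<le> 3"
proof -
  define N where "N = Max (insert 0 ((\<lambda>i. nat \<bar>i\<bar>) ` F))"
  have "nat \<bar>i\<bar> \<le> N" if "i \<in> F" for i using assms(3) that unfolding N_def by (intro Max_ge) auto
  then have "F \<subseteq> {-int N..int N}" by force
  then have "(\<Sum>i\<in>F. r ^ nat \<bar>i\<bar>) \<le> (\<Sum>i\<in>{-int N..int N}. r ^ nat \<bar>i\<bar>)"
    using assms by (intro sum_mono2) auto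
  also have "\<dots> \<le> 3" using sum_power_abs_symmetric_le[OF assms(1,2), of N] zero_le_power[OF assms(1), of N] by linarith
  finally show ?thesis .
qed

lemma power_abs_summable_on:
  fixes r :: real
  assumes "0 \<le> r" "r \<le> 1 / 2"
  shows "(\<lambda>i::int. r ^ nat \<bar>i\<bar>) summable_on A" "infsum (\<lambda>i::int. r ^ nat \<bar>i\<bar>) A \<le> 3"
proof -
  show sm: "(\<lambda>i::int. r ^ nat \<bar>i\<bar>) summable_on A"
    using assms sum_power_abs_le by (intro nonneg_bdd_above_summable_on) (auto simp: bdd_above_def)
  show "infsum (\<lambda>i::int. r ^ nat \<bar>i\<bar>) A \<le> 3"
    using sm by (rule infsum_le_finite_sums) (use sum_power_abs_le assms in auto)
qed

lemma weight_pos: "0 < weight i"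
  by (simp add: weight_def)

lemma weighted_disagreement_nonneg: "h > 0 \<Longrightarrow> 0 \<le> weight i * (disagreement h f g i / h)"
  using weight_pos[of i] by (simp add: disagreement_def)

lemma weighted_disagreement_summable_on:
  assumes "is_step_fun h f" "is_step_fun h g" "h > 0"
  shows "(\<lambda>i. weight i * (disagreement h f g i / h)) summable_on A"
proof (rule summable_on_comparison_test)
  show "weight summable_on A" unfolding weight_def by (rule power_abs_summable_on) auto
  fix i
  have "disagreement h f g i / h \<le> 1" using disagreement_le[OF assms, of i] assms(3) by simp
  then show "weight i * (disagreement h f g i / h) \<le> weight i"
    using weight_pos[of i] by (intro mult_left_le) auto
  show "0 \<le> weight i * (disagreement h f g i / h)"
    using weighted_disagreement_nonneg assms(3) .
qed

lemma flowdist_eq_infsum: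
  assumes "is_step_fun h f" "is_step_fun h g"
  shows "flowdist h f g = (\<Sum>\<^sub>\<infinity>i. weight i * (disagreement h f g i / h))"
  unfolding flowdist_def weight_def
  by (rule infsum_cong) (simp add: integral_disagreement[OF assms, unfolded cell_def])

lemma weighted_disagreement_le_flowdist:
  assumes "is_step_fun h f" "is_step_fun h g" "h > 0"
  shows "weight i * (disagreement h f g i / h) \<le> flowdist h f g"
proof -
  have "(\<Sum>\<^sub>\<infinity>j\<in>{i}. weight j * (disagreement h f g j / h))
      \<le> (\<Sum>\<^sub>\<infinity>j. weight j * (disagreement h f g j / h))"
    using weighted_disagreement_summable_on[OF assms] weighted_disagreement_nonneg[OF assms(3)]
    by (intro infsum_mono_neutral) auto
  then show ?thesis using flowdist_eq_infsum[OF assms(1,2)] by simp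
qed

lemma flowdist_pos:
  assumes "is_step_fun h f" "is_step_fun h g" "h > 0" "f \<noteq> g"
  shows "0 < flowdist h f g"
proof -
  obtain u where fgu: "f u \<noteq> g u" using assms(4) by auto
  obtain e1 where e1: "e1 > u" "\<forall>t\<in>{u..<e1}. f t = f u"
    using step_fun_locally_const[OF assms(3,1)] by blast
  obtain e2 where e2: "e2 > u" "\<forall>t\<in>{u..<e2}. g t = g u"
    using step_fun_locally_const[OF assms(3,2)] by blast
  define i where "i = \<lfloor>u / h\<rfloor>"
  have ui: "of_int i * h \<le> u \<and> u < (of_int i + 1) * h"
    using floor_divide_eq_iff[OF assms(3), of u i] i_def by simp
  define e where "e = min (min e1 e2) ((of_int i + 1) * h)"
  have "u < e" using e1 e2 ui unfolding e_def by auto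
  moreover have "{u..<e} \<subseteq> {s. f s \<noteq> g s} \<inter> cell h i"
  proof
    fix t assume t: "t \<in> {u..<e}"
    then have t': "t \<in> {u..<e1}" "t \<in> {u..<e2}" "u \<le> t" "t < (of_int i + 1) * h"
      unfolding e_def by auto
    then have "f t = f u" "g t = g u" using e1(2) e2(2) by blast+
    moreover have "t \<in> cell h i" using t'(3,4) ui unfolding cell_def by auto
    ultimately show "t \<in> {s. f s \<noteq> g s} \<inter> cell h i" using fgu by auto
  qed
  ultimately have "e - u \<le> disagreement h f g i"
    using disagreement_ge_interval[OF assms(1,2)] by blast
  then have "0 < weight i * (disagreement h f g i / h)"
    using \<open>u < e\<close> weight_pos[of i] assms(3) by simp
  also have "\<dots> \<le> flowdist h f g" by (rule weighted_disagreement_le_flowdist[OF assms(1-3)])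
  finally show ?thesis .
qed

lemma flowdist_triangle:
  assumes "is_step_fun h x" "is_step_fun h y" "is_step_fun h z" "h > 0"
  shows "flowdist h x z \<le> flowdist h x y + flowdist h y z"
proof -
  have "flowdist h x z = (\<Sum>\<^sub>\<infinity>i. weight i * (disagreement h x z i / h))"
    by (rule flowdist_eq_infsum[OF assms(1,3)])
  also have "\<dots> \<le> (\<Sum>\<^sub>\<infinity>i. weight i * (disagreement h x y i / h) + weight i * (disagreement h y z i / h))"
  proof (rule infsum_mono)
    fix i
    have "disagreement h x z i / h \<le> disagreement h x y i / h + disagreement h y z i / h"
      using disagreement_triangle[OF assms(1-3), of i] assms(4) by (simp add: field_simps)
    then show "weight i * (disagreement h x z i / h)
        \<le> weight i * (disagreement h x y i / h) + weight i * (disagreement h y z i / h)"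
      using mult_left_mono[OF _ less_imp_le[OF weight_pos[of i]]] by (metis distrib_left)
  qed (intro summable_on_add weighted_disagreement_summable_on assms)+
  also have "\<dots> = flowdist h x y + flowdist h y z"
    using infsum_add[OF weighted_disagreement_summable_on[OF assms(1,2,4)]
        weighted_disagreement_summable_on[OF assms(2,3,4)]]
      flowdist_eq_infsum[OF assms(1,2)] flowdist_eq_infsum[OF assms(2,3)] by simp
  finally show ?thesis .
qed

lemma Metric_space_Delta:
  fixes V :: "'v set"
  assumes "h > 0"
  shows "Metric_space (Delta V E h) (flowdist h)"
proof
  fix x y z :: "real \<Rightarrow> 'v"
  show "0 \<le> flowdist h x y"
    unfolding flowdist_def
  proof (intro infsum_nonneg mult_nonneg_nonneg)
    fix i :: int
    let ?I = "{of_int i * h .. (of_int i + 1) * h}"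
      and ?f = "(\<lambda>t. if x t \<noteq> y t then 1 else 0) :: real \<Rightarrow> real"
    show "0 \<le> integral ?I ?f"
      by (cases "?f integrable_on ?I") (auto intro: integral_nonneg simp: not_integrable_integral)
  qed (use assms in auto)
  have "(\<lambda>t. if x t \<noteq> y t then 1 else 0) = ((\<lambda>t. if y t \<noteq> x t then 1 else 0) :: real \<Rightarrow> real)"
    by auto
  then show "flowdist h x y = flowdist h y x" unfolding flowdist_def by simp
  assume xy: "x \<in> Delta V E h" "y \<in> Delta V E h"
  show "flowdist h x y = 0 \<longleftrightarrow> x = y"
  proof
    assume "flowdist h x y = 0"
    then show "x = y"
      using flowdist_pos[OF is_step_fun_Delta[OF assms xy(1)] is_step_fun_Delta[OF assms xy(2)] assms]
      by fastforce
  qed (simp add: flowdist_def)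
  assume "z \<in> Delta V E h"
  then show "flowdist h x z \<le> flowdist h x y + flowdist h y z"
    using xy by (intro flowdist_triangle is_step_fun_Delta assms)
qed

section \<open>Compactness of the lifts\<close>

lemma floor_neq_imp_between:
  fixes a b :: real
  assumes "a \<le> b" "\<lfloor>a\<rfloor> \<noteq> \<lfloor>b\<rfloor>"
  shows "a < of_int \<lfloor>b\<rfloor> \<and> of_int \<lfloor>b\<rfloor> \<le> b"
proof -
  have "\<lfloor>a\<rfloor> + 1 \<le> \<lfloor>b\<rfloor>" using floor_mono[OF assms(1)] assms(2) by simp
  then show ?thesis by linarith
qed

lemma floor_shift_cell:
  assumes "h > 0" "u \<in> cell h i" "s \<in> {0..h}"
  shows "\<lfloor>(u + s) / h\<rfloor> \<in> {i..i + 2}"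
proof -
  have "of_int i * h \<le> u + s" "u + s \<le> (of_int i + 2) * h"
    using assms(2,3) unfolding cell_def by (auto simp: algebra_simps)
  then have "of_int i \<le> (u + s) / h" "(u + s) / h \<le> of_int i + 2"
    using assms(1) by (simp_all add: pos_le_divide_eq pos_divide_le_eq)
  then show ?thesis by simp linarith
qed

text \<open>Shifting the phase by \<open>\<delta>\<close> changes a step function only on three intervals of length \<open>\<delta>\<close> per cell.\<close>

lemma disagreement_phase_shift_le:
  assumes h: "h > 0" and s: "s \<in> {0..h}" and s': "s' \<in> {0..h}"
    and agree: "\<forall>k\<in>{i..i + 2}. w k = w' k"
  shows "disagreement h (step_fun h w s) (step_fun h w' s') i \<le> 3 * \<bar>s - s'\<bar>"
proof -
  define lo where "lo = min s s'"
  define hi where "hi = max s s'"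
  have lohi: "lo \<le> hi" "hi - lo = \<bar>s - s'\<bar>" "hi \<in> {0..h}" using s s' unfolding lo_def hi_def by auto
  define J where "J = (\<lambda>j::int. {of_int (i + j) * h - hi .. of_int (i + j) * h - lo})"
  let ?D = "{u. step_fun h w s u \<noteq> step_fun h w' s' u} \<inter> cell h i"
  have "?D \<subseteq> J 0 \<union> J 1 \<union> J 2"
  proof
    fix u assume u: "u \<in> ?D"
    then have ui: "u \<in> cell h i" by auto
    have "\<lfloor>(u + s) / h\<rfloor> \<noteq> \<lfloor>(u + s') / h\<rfloor>"
      using u agree floor_shift_cell[OF h ui s] unfolding step_fun_def by auto
    then have neq: "\<lfloor>(u + lo) / h\<rfloor> \<noteq> \<lfloor>(u + hi) / h\<rfloor>"
      unfolding lo_def hi_def by (cases "s \<le> s'") (auto simp: min_def max_def)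
    have "(u + lo) / h \<le> (u + hi) / h" using lohi h by (simp add: divide_right_mono)
    define k where "k = \<lfloor>(u + hi) / h\<rfloor>"
    have "(u + lo) / h < of_int k" "of_int k \<le> (u + hi) / h"
      using floor_neq_imp_between[OF \<open>(u + lo) / h \<le> (u + hi) / h\<close> neq] unfolding k_def by auto
    then have "u + lo < of_int k * h" "of_int k * h \<le> u + hi"
      using h by (simp_all add: pos_divide_less_eq pos_le_divide_eq)
    then have "u \<in> J (k - i)" unfolding J_def by simp
    moreover have "k - i \<in> {0, 1, 2}" using floor_shift_cell[OF h ui lohi(3)] unfolding k_def by auto
    ultimately show "u \<in> J 0 \<union> J 1 \<union> J 2" by auto
  qed
  moreover have "J 0 \<union> J 1 \<union> J 2 \<in> fmeasurable lborel"
    unfolding J_def by (intro fmeasurable.Un) (metis cbox_interval fmeasurable_cbox)+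
  moreover have "?D \<in> fmeasurable lborel"
    by (rule disagreement_fmeasurable) (auto simp: is_step_fun_def)
  ultimately have "disagreement h (step_fun h w s) (step_fun h w' s') i
      \<le> measure lborel (J 0 \<union> J 1 \<union> J 2)"
    unfolding disagreement_def by (intro measure_mono_fmeasurable) (auto simp: fmeasurable_def)
  also have "\<dots> \<le> measure lborel (J 0) + measure lborel (J 1) + measure lborel (J 2)"
    using measure_Un_le[of "J 0 \<union> J 1" lborel "J 2"] measure_Un_le[of "J 0" lborel "J 1"]
    unfolding J_def by simp
  also have "\<dots> = 3 * \<bar>s - s'\<bar>" unfolding J_def using lohi by simp
  finally show ?thesis .
qed

lemma flowdist_step_fun_le:
  assumes h: "h > 0" and s: "s \<in> {0..h}" and s': "s' \<in> {0..h}"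
    and agree: "\<forall>k\<in>{-int N..int N + 2}. w k = w' k"
  shows "flowdist h (step_fun h w s) (step_fun h w' s') \<le> 9 * \<bar>s - s'\<bar> / h + 3 * (1 / 2) ^ N"
proof -
  let ?f = "step_fun h w s" and ?g = "step_fun h w' s'"
  have sf: "is_step_fun h ?f" "is_step_fun h ?g" unfolding is_step_fun_def by blast+
  define T where "T = (\<lambda>i. weight i * (disagreement h ?f ?g i / h))"
  define F where "F = {-int N..int N}"
  have T: "T summable_on A" for A unfolding T_def by (rule weighted_disagreement_summable_on[OF sf h])
  have "flowdist h ?f ?g = infsum T (F \<union> - F)"
    unfolding T_def by (simp add: flowdist_eq_infsum[OF sf])
  also have "\<dots> = infsum T F + infsum T (- F)"
    by (rule infsum_Un_disjoint[OF T T]) auto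
  also have "infsum T F \<le> 9 * \<bar>s - s'\<bar> / h"
  proof -
    have "infsum T F = sum T F" unfolding F_def by simp
    also have "\<dots> \<le> (\<Sum>i\<in>F. weight i * (3 * \<bar>s - s'\<bar> / h))"
    proof (rule sum_mono)
      fix i assume "i \<in> F"
      then have "disagreement h ?f ?g i \<le> 3 * \<bar>s - s'\<bar>"
        using agree unfolding F_def by (intro disagreement_phase_shift_le[OF h s s']) auto
      then show "T i \<le> weight i * (3 * \<bar>s - s'\<bar> / h)"
        unfolding T_def using weight_pos[of i] h by (intro mult_left_mono divide_right_mono) auto
    qed
    also have "\<dots> = sum weight F * (3 * \<bar>s - s'\<bar> / h)" by (rule sum_distrib_right[symmetric])
    also have "\<dots> \<le> 3 * (3 * \<bar>s - s'\<bar> / h)"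
      using sum_power_abs_le[of "1 / 4" F] h unfolding weight_def F_def by (intro mult_right_mono) auto
    finally show ?thesis by simp
  qed
  moreover have "infsum T (- F) \<le> 3 * (1 / 2) ^ N"
  proof -
    have "infsum T (- F) \<le> (\<Sum>\<^sub>\<infinity>i\<in>- F. (1 / 2) ^ N * ((1 / 2 :: real) ^ nat \<bar>i\<bar>))"
    proof (rule infsum_mono[OF T])
      show "(\<lambda>i. (1 / 2) ^ N * ((1 / 2 :: real) ^ nat \<bar>i\<bar>)) summable_on - F"
        by (intro summable_on_cmult_right power_abs_summable_on) auto
      fix i assume "i \<in> - F"
      then have "N \<le> nat \<bar>i\<bar>" unfolding F_def by auto
      have "T i \<le> weight i"
        unfolding T_def using disagreement_le[OF sf h, of i] h weight_pos[of i]
        by (intro mult_left_le) (auto simp: disagreement_def)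
      also have "weight i = (1 / 2) ^ nat \<bar>i\<bar> * (1 / 2 :: real) ^ nat \<bar>i\<bar>"
        unfolding weight_def by (simp add: power_mult_distrib[symmetric])
      also have "\<dots> \<le> (1 / 2) ^ N * (1 / 2 :: real) ^ nat \<bar>i\<bar>"
        using \<open>N \<le> nat \<bar>i\<bar>\<close> by (intro mult_right_mono power_decreasing) auto
      finally show "T i \<le> (1 / 2) ^ N * ((1 / 2 :: real) ^ nat \<bar>i\<bar>)" .
    qed
    also have "\<dots> = (1 / 2) ^ N * (\<Sum>\<^sub>\<infinity>i\<in>- F. (1 / 2 :: real) ^ nat \<bar>i\<bar>)"
      by (rule infsum_cmult_right')
    also have "\<dots> \<le> (1 / 2) ^ N * 3"
      by (intro mult_left_mono power_abs_summable_on) auto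
    finally show ?thesis by simp
  qed
  ultimately show ?thesis by linarith
qed

definition path_topology :: "'v set \<Rightarrow> (int \<Rightarrow> 'v) topology" where
  "path_topology C = product_topology (\<lambda>_::int. discrete_topology C) UNIV"

definition path_phase_topology :: "'v set \<Rightarrow> ('v \<times> 'v) set \<Rightarrow> real \<Rightarrow> ((int \<Rightarrow> 'v) \<times> real) topology" where
  "path_phase_topology C E h =
     prod_topology (subtopology (path_topology C) (Omega C E)) (top_of_set {0..h})"

lemma topspace_path_topology: "topspace (path_topology C) = {w. \<forall>i. w i \<in> C}"
  unfolding path_topology_def by (auto simp: PiE_iff)

lemma Omega_subset_topspace: "Omega C E \<subseteq> topspace (path_topology C)"
  unfolding topspace_path_topology Omega_def by auto

lemma Omega_mono: "C \<subseteq> V \<Longrightarrow> Omega C E \<subseteq> Omega V E"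
  unfolding Omega_def by auto

lemma openin_cylinder:
  assumes "finite K"
  shows "openin (path_topology C) {w \<in> topspace (path_topology C). \<forall>k\<in>K. w k = a k}"
  using assms
proof (induction K rule: finite_induct)
  case (insert k0 K)
  have "continuous_map (path_topology C) (discrete_topology C) (\<lambda>x. x k0)"
    unfolding path_topology_def by (rule continuous_map_product_projection) simp
  then have "openin (path_topology C) {x \<in> topspace (path_topology C). x k0 \<in> {a k0} \<inter> C}"
    by (rule openin_continuous_map_preimage) simp
  moreover have "{w \<in> topspace (path_topology C). \<forall>k\<in>insert k0 K. w k = a k}
      = {x \<in> topspace (path_topology C). x k0 \<in> {a k0} \<inter> C}
        \<inter> {w \<in> topspace (path_topology C). \<forall>k\<in>K. w k = a k}"
    unfolding topspace_path_topology by auto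
  ultimately show ?case using insert.IH by (simp add: openin_Int)
qed simp

lemma closedin_Omega: "closedin (path_topology C) (Omega C E)"
  unfolding closedin_def
proof (intro conjI Omega_subset_topspace)
  show "openin (path_topology C) (topspace (path_topology C) - Omega C E)"
  proof (subst openin_subopen, intro ballI)
    fix w assume w: "w \<in> topspace (path_topology C) - Omega C E"
    then obtain i where i: "(w i, w (i + 1)) \<notin> E" unfolding topspace_path_topology Omega_def by auto
    let ?T = "{w' \<in> topspace (path_topology C). \<forall>k\<in>{i, i + 1}. w' k = w k}"
    have "openin (path_topology C) ?T" by (rule openin_cylinder) simp
    moreover have "?T \<subseteq> topspace (path_topology C) - Omega C E"
      using i unfolding Omega_def by (auto dest: spec[of _ i])
    ultimately show "\<exists>T. openin (path_topology C) T \<and> w \<in> T \<and> T \<subseteq> topspace (path_topology C) - Omega C E"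
      using w by blast
  qed
qed

lemma compact_space_path_phase_topology:
  assumes "finite C"
  shows "compact_space (path_phase_topology C E h)"
proof -
  have "compact_space (path_topology C)"
    unfolding path_topology_def compact_space_product_topology using assms
    by (simp add: compact_space_discrete_topology)
  then have "compact_space (subtopology (path_topology C) (Omega C E))"
    using closedin_Omega by (intro compact_space_subtopology closedin_compact_space)
  moreover have "compact_space (top_of_set {0..h})"
    by (intro compact_space_subtopology) simp
  ultimately show ?thesis unfolding path_phase_topology_def compact_space_prod_topology by simp
qed

lemma continuous_map_step_fun:
  fixes V :: "'v set"
  assumes h: "h > 0" and CV: "C \<subseteq> V"
  shows "continuous_map (path_phase_topology C E h) (flowtop V E h) (\<lambda>(w, s). step_fun h w s)"
proof -
  interpret M: Metric_space "Delta V E h" "flowdist h" by (rule Metric_space_Delta[OF h])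
  show ?thesis unfolding flowtop_def M.continuous_map_to_metric
  proof (intro ballI allI impI)
    fix x :: "(int \<Rightarrow> 'v) \<times> real" and \<epsilon> :: real
    assume x: "x \<in> topspace (path_phase_topology C E h)" and e: "0 < \<epsilon>"
    obtain w s where xws: "x = (w, s)" by (cases x)
    have w: "w \<in> Omega C E" and s: "s \<in> {0..h}"
      using x unfolding xws path_phase_topology_def by auto
    obtain N where N: "(1 / 2 :: real) ^ N < \<epsilon> / 6"
      using real_arch_pow_inv[of "\<epsilon> / 6" "1 / 2 :: real"] e by auto
    define \<delta> where "\<delta> = \<epsilon> * h / 18"
    define A where "A = {w' \<in> topspace (path_topology C). \<forall>k\<in>{-int N..int N + 2}. w' k = w k}"
    define U where "U = (A \<inter> Omega C E) \<times> ({0..h} \<inter> ball s \<delta>)"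
    have "openin (path_topology C) A" unfolding A_def by (rule openin_cylinder) simp
    then have "openin (subtopology (path_topology C) (Omega C E)) (A \<inter> Omega C E)"
      unfolding openin_subtopology by blast
    moreover have "openin (top_of_set {0..h}) ({0..h} \<inter> ball s \<delta>)" by (rule openin_open_Int) simp
    ultimately have oU: "openin (path_phase_topology C E h) U"
      unfolding U_def path_phase_topology_def openin_prod_Times_iff by blast
    have xU: "x \<in> U" unfolding U_def xws A_def \<delta>_def using w s e h Omega_subset_topspace by auto
    have mball: "step_fun h w' s' \<in> M.mball (step_fun h w s) \<epsilon>" if "(w', s') \<in> U" for w' s'
    proof -
      have w': "w' \<in> Omega C E" and s': "s' \<in> {0..h}" and ss: "\<bar>s - s'\<bar> < \<delta>"
        and "\<forall>k\<in>{-int N..int N + 2}. w k = w' k"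
        using that unfolding U_def A_def by (auto simp: dist_real_def)
      then have "flowdist h (step_fun h w s) (step_fun h w' s') \<le> 9 * \<bar>s - s'\<bar> / h + 3 * (1 / 2) ^ N"
        by (intro flowdist_step_fun_le[OF h s])
      also have "\<dots> < \<epsilon>"
      proof -
        have "9 * \<bar>s - s'\<bar> / h < \<epsilon> / 2"
          using ss h unfolding \<delta>_def by (simp add: pos_divide_less_eq)
        then show ?thesis using N by linarith
      qed
      finally have "flowdist h (step_fun h w s) (step_fun h w' s') < \<epsilon>" .
      moreover have "step_fun h w s \<in> Delta V E h" "step_fun h w' s' \<in> Delta V E h"
        using step_fun_in_Delta[OF h] Omega_mono[OF CV] w w' by blast+
      ultimately show ?thesis by simp
    qed
    have "\<forall>y\<in>U. (case y of (w, s) \<Rightarrow> step_fun h w s) \<in> M.mball (case x of (w, s) \<Rightarrow> step_fun h w s) \<epsilon>"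
      using mball unfolding xws by auto
    with oU xU show "\<exists>U. openin (path_phase_topology C E h) U \<and> x \<in> U \<and>
        (\<forall>y\<in>U. (case y of (w, s) \<Rightarrow> step_fun h w s) \<in> M.mball (case x of (w, s) \<Rightarrow> step_fun h w s) \<epsilon>)"
      by blast
  qed
qed

lemma step_fun_image_eq_lift:
  assumes h: "h > 0" and CV: "C \<subseteq> V"
  shows "(\<lambda>(w, s). step_fun h w s) ` (Omega C E \<times> {0..h}) = lift V E h C"
proof
  show "(\<lambda>(w, s). step_fun h w s) ` (Omega C E \<times> {0..h}) \<subseteq> lift V E h C"
  proof
    fix f assume "f \<in> (\<lambda>(w, s). step_fun h w s) ` (Omega C E \<times> {0..h})"
    then obtain w s where w: "w \<in> Omega C E" and f: "f = step_fun h w s" by auto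
    have "f \<in> Delta V E h" unfolding f using step_fun_in_Delta[OF h] Omega_mono[OF CV] w by blast
    moreover have "f t \<in> C" for t unfolding f step_fun_def using w unfolding Omega_def by auto
    ultimately show "f \<in> lift V E h C" unfolding lift_def by auto
  qed
next
  show "lift V E h C \<subseteq> (\<lambda>(w, s). step_fun h w s) ` (Omega C E \<times> {0..h})"
  proof
    fix f assume f: "f \<in> lift V E h C"
    then obtain w c where w: "w \<in> Omega V E" and fw: "f = step_fun h w c"
      unfolding lift_def using mem_Delta_iff[OF h] by blast
    have wC: "w i \<in> C" for i
    proof -
      have "f (of_int i * h - c) = w i" unfolding fw step_fun_def using h by simp
      then show ?thesis using f unfolding lift_def by (metis (mono_tags, lifting) mem_Collect_eq)
    qed
    \<comment> \<open>Normalise the phase into \<open>[0, h]\<close> by shifting the path by \<open>\<lfloor>c / h\<rfloor>\<close> steps.\<close>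
    define m where "m = \<lfloor>c / h\<rfloor>"
    define s where "s = c - of_int m * h"
    define w' where "w' = (\<lambda>i. w (i + m))"
    have "s \<in> {0..h}"
      using floor_divide_eq_iff[OF h, of c m] unfolding m_def s_def by (auto simp: algebra_simps)
    moreover have "w' \<in> Omega C E" unfolding Omega_def w'_def
    proof (intro CollectI allI conjI wC)
      fix i
      have "(w (i + m), w (i + m + 1)) \<in> E" using w unfolding Omega_def by blast
      then show "(w (i + m), w (i + 1 + m)) \<in> E" by (simp add: algebra_simps)
    qed
    moreover have "step_fun h w' s = f"
    proof
      fix u
      have "(u + s) / h + of_int m = (u + c) / h" unfolding s_def using h by (simp add: field_simps)
      then have "\<lfloor>(u + s) / h\<rfloor> + m = \<lfloor>(u + c) / h\<rfloor>" by (metis floor_add_int)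
      then show "step_fun h w' s u = f u" unfolding fw step_fun_def w'_def by simp
    qed
    ultimately show "f \<in> (\<lambda>(w, s). step_fun h w s) ` (Omega C E \<times> {0..h})" by force
  qed
qed

lemma compactin_lift:
  fixes V :: "'v set"
  assumes h: "h > 0" and CV: "C \<subseteq> V" and fin: "finite V"
  shows "compactin (flowtop V E h) (lift V E h C)"
proof -
  have "topspace (path_phase_topology C E h) = Omega C E \<times> {0..h}"
    unfolding path_phase_topology_def using Omega_subset_topspace by auto
  moreover have "compactin (path_phase_topology C E h) (topspace (path_phase_topology C E h))"
    using compact_space_path_phase_topology[of C E h] finite_subset[OF CV fin]
    unfolding compact_space_def by blast
  ultimately show ?thesis
    using image_compactin[OF _ continuous_map_step_fun[OF h CV]] step_fun_image_eq_lift[OF h CV]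
    by metis
qed

section \<open>Limit sets\<close>

definition omega_vertices :: "(int \<Rightarrow> 'v) \<Rightarrow> 'v set" where
  "omega_vertices w = {v. \<forall>T. \<exists>j\<ge>T. w j = v}"

definition alpha_vertices :: "(int \<Rightarrow> 'v) \<Rightarrow> 'v set" where
  "alpha_vertices w = {v. \<forall>T. \<exists>j\<le>T. w j = v}"

lemma Omega_rtrancl:
  assumes "w \<in> Omega V E" "i \<le> j"
  shows "(w i, w j) \<in> E\<^sup>*"
proof -
  have "(w i, w (i + int n)) \<in> E\<^sup>*" for n
  proof (induction n)
    case (Suc n)
    have "(w (i + int n), w (i + int n + 1)) \<in> E" using assms(1) unfolding Omega_def by blast
    with Suc have "(w i, w (i + int n + 1)) \<in> E\<^sup>*" by (rule rtrancl_into_rtrancl)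
    then show ?case by (simp add: ac_simps)
  qed simp
  from this[of "nat (j - i)"] show ?thesis using assms(2) by simp
qed

lemma Omega_trancl_restrict:
  assumes "w \<in> Omega V E" "\<forall>k\<ge>a. w k \<in> R"
  shows "(w a, w (a + 1 + int n)) \<in> (E \<inter> R \<times> R)\<^sup>+"
proof (induction n)
  case 0
  have "(w a, w (a + 1)) \<in> E" using assms(1) unfolding Omega_def by blast
  then show ?case using assms(2) by auto
next
  case (Suc n)
  have "(w (a + 1 + int n), w (a + 1 + int n + 1)) \<in> E" using assms(1) unfolding Omega_def by blast
  moreover have "w (a + 1 + int n) \<in> R" "w (a + 1 + int n + 1) \<in> R" using assms(2) by auto
  ultimately have "(w (a + 1 + int n), w (a + 1 + int (Suc n))) \<in> E \<inter> R \<times> R" by (simp add: add.assoc)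
  with Suc show ?case by (rule trancl_into_trancl)
qed

lemma omega_vertices_eventually:
  assumes "finite V" "w \<in> Omega V E"
  obtains T0 where "\<And>i. T0 \<le> i \<Longrightarrow> w i \<in> omega_vertices w"
proof -
  have "\<forall>v\<in>V - omega_vertices w. \<exists>T. \<forall>j\<ge>T. w j \<noteq> v" unfolding omega_vertices_def by auto
  then obtain T where T: "\<And>v j. v \<in> V - omega_vertices w \<Longrightarrow> T v \<le> j \<Longrightarrow> w j \<noteq> v" by metis
  define T0 where "T0 = Max (insert 0 (T ` (V - omega_vertices w)))"
  have "w i \<in> omega_vertices w" if "T0 \<le> i" for i
  proof (rule ccontr)
    assume "w i \<notin> omega_vertices w"
    moreover have "w i \<in> V" using assms(2) unfolding Omega_def by blast
    ultimately have v: "w i \<in> V - omega_vertices w" by simp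
    then have "T (w i) \<le> T0" unfolding T0_def using assms(1) by (intro Max_ge) auto
    then show False using T[OF v, of i] that by simp
  qed
  then show ?thesis using that by blast
qed

lemma strongly_connected_omega_vertices:
  assumes "finite V" "w \<in> Omega V E"
  shows "strongly_connected_set E (omega_vertices w)"
proof -
  obtain T0 where T0: "\<And>i. T0 \<le> i \<Longrightarrow> w i \<in> omega_vertices w"
    using omega_vertices_eventually[OF assms] by blast
  show ?thesis
    unfolding strongly_connected_set_def
  proof (intro conjI ballI)
    show "omega_vertices w \<noteq> {}" using T0 by blast
    fix u v assume u: "u \<in> omega_vertices w" and v: "v \<in> omega_vertices w"
    obtain a where a: "a \<ge> T0" "w a = u" using u unfolding omega_vertices_def by blast
    obtain b where b: "b \<ge> a + 1" "w b = v" using v unfolding omega_vertices_def by blast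
    have "\<forall>k\<ge>a. w k \<in> omega_vertices w" using T0 a(1) by auto
    from Omega_trancl_restrict[OF assms(2) this, of "nat (b - a - 1)"]
    show "(u, v) \<in> (E \<inter> omega_vertices w \<times> omega_vertices w)\<^sup>+" using a(2) b by simp
  qed
qed

lemma Omega_reverse: "w \<in> Omega V E \<Longrightarrow> (\<lambda>i. w (- i)) \<in> Omega V (E\<inverse>)"
  unfolding Omega_def by (auto simp: algebra_simps dest: spec[of _ "- _ - 1"])

lemma omega_vertices_reverse: "omega_vertices (\<lambda>i. w (- i)) = alpha_vertices w"
  unfolding omega_vertices_def alpha_vertices_def
  by (metis (no_types, opaque_lifting) minus_minus neg_le_iff_le)

lemma strongly_connected_alpha_vertices:
  assumes "finite V" "w \<in> Omega V E"
  shows "strongly_connected_set E (alpha_vertices w)"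
  using strongly_connected_omega_vertices[OF assms(1) Omega_reverse[OF assms(2)]]
  by (simp add: omega_vertices_reverse strongly_connected_set_converse)

lemma psi_step_fun: "psi t (step_fun h w c) = step_fun h w (c + t)"
  unfolding psi_def step_fun_def by (simp add: algebra_simps)

lemma psi_Delta:
  assumes "h > 0" "f \<in> Delta V E h"
  shows "psi t f \<in> Delta V E h"
  using assms mem_Delta_iff[OF assms(1)] psi_step_fun by metis

lemma invariant_lift: "h > 0 \<Longrightarrow> invariant (lift V E h C)"
  unfolding invariant_def lift_def by (auto simp: psi_Delta) (simp add: psi_def)

lemma lift_self: "h > 0 \<Longrightarrow> lift V E h V = Delta V E h"
  unfolding lift_def using Delta_values by blast

text \<open>A step function \<open>\<epsilon>\<close>-close to \<open>y\<close> must take the value \<open>y u\<close> somewhere in \<open>[u, u + h)\<close>: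
  otherwise they would disagree on a whole interval \<open>[u, e)\<close>.\<close>

lemma flowdist_small_imp_value_attained:
  assumes h: "h > 0" and y: "is_step_fun h y"
  obtains \<epsilon> where "\<epsilon> > 0"
    "\<And>t. flowdist h (step_fun h w t) y < \<epsilon> \<Longrightarrow> \<exists>t'. u \<le> t' \<and> t' < u + h \<and> y u = w \<lfloor>(t' + t) / h\<rfloor>"
proof -
  obtain e1 where e1: "e1 > u" "\<forall>t\<in>{u..<e1}. y t = y u" using step_fun_locally_const[OF h y] by blast
  define i where "i = \<lfloor>u / h\<rfloor>"
  have ui: "of_int i * h \<le> u \<and> u < (of_int i + 1) * h" using floor_divide_eq_iff[OF h, of u i] i_def by simp
  define e where "e = min e1 ((of_int i + 1) * h)"
  have ue: "u < e" using e1 ui unfolding e_def by simp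
  have "(of_int i + 1) * h \<le> u + h" using ui by (simp add: algebra_simps)
  then have eu: "e \<le> u + h" unfolding e_def by linarith
  define \<epsilon> where "\<epsilon> = weight i * ((e - u) / h)"
  have "0 < \<epsilon>" unfolding \<epsilon>_def using weight_pos[of i] ue h by simp
  moreover have "\<exists>t'. u \<le> t' \<and> t' < u + h \<and> y u = w \<lfloor>(t' + t) / h\<rfloor>"
    if close: "flowdist h (step_fun h w t) y < \<epsilon>" for t
  proof (rule ccontr)
    assume none: "\<not> (\<exists>t'. u \<le> t' \<and> t' < u + h \<and> y u = w \<lfloor>(t' + t) / h\<rfloor>)"
    let ?f = "step_fun h w t"
    have f: "is_step_fun h ?f" unfolding is_step_fun_def by blast
    have "{u..<e} \<subseteq> {s. ?f s \<noteq> y s} \<inter> cell h i"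
    proof
      fix t' assume t': "t' \<in> {u..<e}"
      then have "t' \<in> {u..<e1}" "t' < (of_int i + 1) * h" "t' < u + h" using eu unfolding e_def by auto
      then have "y t' = y u" using e1(2) by blast
      moreover have "t' \<in> cell h i" using ui t' \<open>t' < (of_int i + 1) * h\<close> unfolding cell_def by simp
      moreover have "?f t' \<noteq> y u"
      proof
        assume "?f t' = y u"
        then have "y u = w \<lfloor>(t' + t) / h\<rfloor>" unfolding step_fun_def by simp
        then show False using none t' \<open>t' < u + h\<close> by auto
      qed
      ultimately show "t' \<in> {s. ?f s \<noteq> y s} \<inter> cell h i" by simp
    qed
    then have "e - u \<le> disagreement h ?f y i" by (rule disagreement_ge_interval[OF f y _ ue])
    then have "\<epsilon> \<le> weight i * (disagreement h ?f y i / h)"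
      unfolding \<epsilon>_def using h weight_pos[of i] by (intro mult_left_mono divide_right_mono) auto
    also have "\<dots> \<le> flowdist h ?f y" by (rule weighted_disagreement_le_flowdist[OF f y h])
    finally show False using close by simp
  qed
  ultimately show ?thesis using that by blast
qed

lemma omega_lim_values:
  fixes V :: "'v set"
  assumes h: "h > 0" and y: "y \<in> omega_lim V E h (step_fun h w c)"
  shows "y \<in> Delta V E h" "y u \<in> omega_vertices w"
proof -
  interpret M: Metric_space "Delta V E h" "flowdist h" by (rule Metric_space_Delta[OF h])
  obtain tk where tk: "filterlim tk at_top sequentially"
    and lim: "limitin (flowtop V E h) (\<lambda>k. psi (tk k) (step_fun h w c)) y sequentially"
    using y unfolding omega_lim_def by blast
  show yD: "y \<in> Delta V E h" using lim unfolding flowtop_def M.limitin_metric by auto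
  obtain \<epsilon> where e: "\<epsilon> > 0" and attained: "\<And>t. flowdist h (step_fun h w t) y < \<epsilon> \<Longrightarrow>
      \<exists>t'. u \<le> t' \<and> t' < u + h \<and> y u = w \<lfloor>(t' + t) / h\<rfloor>"
    using flowdist_small_imp_value_attained[OF h is_step_fun_Delta[OF h yD]] by blast
  show "y u \<in> omega_vertices w" unfolding omega_vertices_def
  proof (intro CollectI allI)
    fix T :: int
    have "\<forall>\<^sub>F k in sequentially. flowdist h (step_fun h w (c + tk k)) y < \<epsilon>"
      using lim e unfolding flowtop_def M.limitin_metric psi_step_fun by (auto elim: eventually_mono)
    moreover have "\<forall>\<^sub>F k in sequentially. of_int T * h - u - c \<le> tk k"
      using tk unfolding filterlim_at_top by blast
    ultimately obtain k where k1: "flowdist h (step_fun h w (c + tk k)) y < \<epsilon>"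
      and k2: "of_int T * h - u - c \<le> tk k"
      using eventually_happens'[OF sequentially_bot eventually_conj] by blast
    obtain t' where t': "u \<le> t'" "y u = w \<lfloor>(t' + (c + tk k)) / h\<rfloor>" using attained[OF k1] by blast
    have "of_int T \<le> (t' + (c + tk k)) / h" using t'(1) k2 h by (simp add: pos_le_divide_eq)
    then have "T \<le> \<lfloor>(t' + (c + tk k)) / h\<rfloor>" by linarith
    then show "\<exists>j\<ge>T. w j = y u" using t'(2) by metis
  qed
qed

lemma alpha_lim_values:
  fixes V :: "'v set"
  assumes h: "h > 0" and y: "y \<in> alpha_lim V E h (step_fun h w c)"
  shows "y \<in> Delta V E h" "y u \<in> alpha_vertices w"
proof -
  interpret M: Metric_space "Delta V E h" "flowdist h" by (rule Metric_space_Delta[OF h])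
  obtain tk where tk: "filterlim tk at_bot sequentially"
    and lim: "limitin (flowtop V E h) (\<lambda>k. psi (tk k) (step_fun h w c)) y sequentially"
    using y unfolding alpha_lim_def by blast
  show yD: "y \<in> Delta V E h" using lim unfolding flowtop_def M.limitin_metric by auto
  obtain \<epsilon> where e: "\<epsilon> > 0" and attained: "\<And>t. flowdist h (step_fun h w t) y < \<epsilon> \<Longrightarrow>
      \<exists>t'. u \<le> t' \<and> t' < u + h \<and> y u = w \<lfloor>(t' + t) / h\<rfloor>"
    using flowdist_small_imp_value_attained[OF h is_step_fun_Delta[OF h yD]] by blast
  show "y u \<in> alpha_vertices w" unfolding alpha_vertices_def
  proof (intro CollectI allI)
    fix T :: int
    have "\<forall>\<^sub>F k in sequentially. flowdist h (step_fun h w (c + tk k)) y < \<epsilon>"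
      using lim e unfolding flowtop_def M.limitin_metric psi_step_fun by (auto elim: eventually_mono)
    moreover have "\<forall>\<^sub>F k in sequentially. tk k \<le> of_int T * h - u - h - c"
      using tk unfolding filterlim_at_bot by blast
    ultimately obtain k where k1: "flowdist h (step_fun h w (c + tk k)) y < \<epsilon>"
      and k2: "tk k \<le> of_int T * h - u - h - c"
      using eventually_happens'[OF sequentially_bot eventually_conj] by blast
    obtain t' where t': "t' < u + h" "y u = w \<lfloor>(t' + (c + tk k)) / h\<rfloor>" using attained[OF k1] by blast
    have "(t' + (c + tk k)) / h < of_int T" using t'(1) k2 h by (simp add: pos_divide_less_eq)
    then have "\<lfloor>(t' + (c + tk k)) / h\<rfloor> \<le> T" by linarith
    then show "\<exists>j\<le>T. w j = y u" using t'(2) by metis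
  qed
qed

lemma limit_sets_nonempty:
  fixes V :: "'v set"
  assumes h: "h > 0" and fin: "finite V" and x: "x \<in> Delta V E h"
  shows "omega_lim V E h x \<noteq> {}" "alpha_lim V E h x \<noteq> {}"
proof -
  interpret M: Metric_space "Delta V E h" "flowdist h" by (rule Metric_space_Delta[OF h])
  have "compactin M.mtopology (Delta V E h)"
    using compactin_lift[OF h order_refl fin, of E] unfolding flowtop_def lift_self[OF h] .
  then have seq_compact: "\<exists>l r. strict_mono r \<and> limitin M.mtopology (\<sigma> \<circ> r) l sequentially"
    if "range \<sigma> \<subseteq> Delta V E h" for \<sigma> :: "nat \<Rightarrow> real \<Rightarrow> 'v"
    using that unfolding M.compactin_sequentially by blast
  have orbit: "range (\<lambda>k. psi (s k) x) \<subseteq> Delta V E h" for s using psi_Delta[OF h x] by blast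
  obtain l r where r: "strict_mono r" and "limitin M.mtopology ((\<lambda>k. psi (real k) x) \<circ> r) l sequentially"
    using seq_compact[OF orbit[of real]] by blast
  moreover have "filterlim (\<lambda>k. real (r k)) at_top sequentially"
    using filterlim_compose[OF filterlim_real_sequentially filterlim_subseq[OF r]] .
  ultimately have "l \<in> omega_lim V E h x" unfolding omega_lim_def flowtop_def comp_def by blast
  then show "omega_lim V E h x \<noteq> {}" by blast
  obtain l' r' where r': "strict_mono r'" and "limitin M.mtopology ((\<lambda>k. psi (- real k) x) \<circ> r') l' sequentially"
    using seq_compact[OF orbit[of "\<lambda>k. - real k"]] by blast
  moreover have "filterlim (\<lambda>k. - real (r' k)) at_bot sequentially"
    using filterlim_compose[OF filterlim_real_sequentially filterlim_subseq[OF r']]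
    by (simp add: filterlim_uminus_at_bot)
  ultimately have "l' \<in> alpha_lim V E h x" unfolding alpha_lim_def flowtop_def comp_def by blast
  then show "alpha_lim V E h x \<noteq> {}" by blast
qed

section \<open>The lifts form a Morse decomposition\<close>

lemma flowdist_ge_1:
  assumes "is_step_fun h f" "is_step_fun h g" "h > 0" "\<And>s. 0 \<le> s \<Longrightarrow> s < h \<Longrightarrow> f s \<noteq> g s"
  shows "1 \<le> flowdist h f g"
proof -
  have "{0..<h} \<subseteq> {s. f s \<noteq> g s} \<inter> cell h 0" using assms(4) unfolding cell_def by auto
  then have "h - 0 \<le> disagreement h f g 0" by (rule disagreement_ge_interval[OF assms(1,2) _ assms(3)])
  then have "1 \<le> weight 0 * (disagreement h f g 0 / h)" using assms(3) by (simp add: weight_def)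
  also have "\<dots> \<le> flowdist h f g" by (rule weighted_disagreement_le_flowdist[OF assms(1-3)])
  finally show ?thesis .
qed

lemma isolated_lift:
  fixes V :: "'v set"
  assumes h: "h > 0"
  shows "isolated V E h (lift V E h C)"
proof -
  interpret M: Metric_space "Delta V E h" "flowdist h" by (rule Metric_space_Delta[OF h])
  define N where "N = (\<Union>k\<in>lift V E h C. M.mball k 1)"
  have "openin (flowtop V E h) N" unfolding N_def flowtop_def by blast
  moreover have "lift V E h C \<subseteq> N" unfolding N_def lift_def by force
  moreover have "x \<in> lift V E h C" if x: "x \<in> Delta V E h" and orbit: "\<forall>t. psi t x \<in> N" for x
  proof -
    obtain w c where w: "w \<in> Omega V E" and xw: "x = step_fun h w c" using x mem_Delta_iff[OF h] by blast
    have "x t0 \<in> C" for t0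
    proof -
      define n where "n = \<lfloor>(t0 + c) / h\<rfloor>"
      let ?f = "psi (of_int n * h - c) x"
      obtain k where k: "k \<in> lift V E h C" and "?f \<in> M.mball k 1" using orbit unfolding N_def by blast
      then have d: "flowdist h k ?f < 1" by simp
      have f: "?f = step_fun h w (of_int n * h)" unfolding xw psi_step_fun by simp
      have f_cell: "?f s = w n" if "0 \<le> s" "s < h" for s
      proof -
        have "\<lfloor>(s + of_int n * h) / h\<rfloor> = n"
          using that floor_divide_eq_iff[OF h, of "s + of_int n * h" n] by (simp add: algebra_simps)
        then show ?thesis unfolding f step_fun_def by simp
      qed
      have "w n \<in> C"
      proof (rule ccontr)
        assume "w n \<notin> C"
        then have "k s \<noteq> ?f s" if "0 \<le> s" "s < h" for s
          using k f_cell[OF that] unfolding lift_def by (metis (mono_tags, lifting) mem_Collect_eq)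
        then have "1 \<le> flowdist h k ?f"
          using k is_step_fun_Delta[OF h] unfolding lift_def f
          by (intro flowdist_ge_1 h) (auto simp: is_step_fun_def)
        then show False using d by simp
      qed
      then show ?thesis unfolding xw step_fun_def n_def by simp
    qed
    then show ?thesis unfolding lift_def using x by blast
  qed
  moreover have "N \<subseteq> Delta V E h" unfolding N_def using M.mball_subset_mspace by blast
  ultimately show ?thesis unfolding isolated_def using interior_of_openin by metis
qed

lemma Omega_nonempty:
  assumes "c \<in> C" and succ: "\<And>v. v \<in> C \<Longrightarrow> \<exists>v'\<in>C. (v, v') \<in> E"
    and pred: "\<And>v. v \<in> C \<Longrightarrow> \<exists>v'\<in>C. (v', v) \<in> E"
  obtains w where "w \<in> Omega C E"
proof -
  obtain sc where sc: "\<And>v. v \<in> C \<Longrightarrow> sc v \<in> C \<and> (v, sc v) \<in> E" using succ by metis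
  obtain pr where pr: "\<And>v. v \<in> C \<Longrightarrow> pr v \<in> C \<and> (pr v, v) \<in> E" using pred by metis
  have scn: "(sc ^^ n) c \<in> C" and prn: "(pr ^^ n) c \<in> C" for n
    by (induction n) (use assms(1) sc pr in auto)
  define w where "w = (\<lambda>i::int. if 0 \<le> i then (sc ^^ nat i) c else (pr ^^ nat (- i)) c)"
  have wC: "w i \<in> C" for i unfolding w_def using scn prn by auto
  have "(w i, w (i + 1)) \<in> E" for i
  proof (cases "0 \<le> i")
    case True
    then have "w (i + 1) = sc (w i)" unfolding w_def by (simp add: nat_add_distrib)
    then show ?thesis using sc[OF wC[of i]] by simp
  next
    case False
    then have "w (i + 1) = (pr ^^ nat (- (i + 1))) c" "nat (- i) = Suc (nat (- (i + 1)))"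
      unfolding w_def by auto
    then have "w i = pr (w (i + 1))" unfolding w_def using False by simp
    then show ?thesis using pr[OF wC[of "i + 1"]] by simp
  qed
  then show ?thesis using that wC unfolding Omega_def by blast
qed

lemma lift_nonempty:
  assumes h: "h > 0" and C: "scc V E C"
  shows "lift V E h C \<noteq> {}"
proof -
  have sc: "strongly_connected_set E C" and CV: "C \<subseteq> V" using C unfolding scc_def by auto
  obtain c where c: "c \<in> C" using sc unfolding strongly_connected_set_def by auto
  have loop: "(v, v) \<in> (E \<inter> C \<times> C)\<^sup>+" if "v \<in> C" for v
    using sc that unfolding strongly_connected_set_def by blast
  obtain w where w: "w \<in> Omega C E"
  proof (rule Omega_nonempty[OF c])
    fix v assume "v \<in> C"
    from loop[OF this] show "\<exists>v'\<in>C. (v, v') \<in> E" by (rule converse_tranclE) auto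
    from loop[OF \<open>v \<in> C\<close>] show "\<exists>v'\<in>C. (v', v) \<in> E" by (rule tranclE) auto
  qed
  then have "step_fun h w 0 \<in> lift V E h C"
    using step_fun_in_Delta[OF h] Omega_mono[OF CV] unfolding lift_def step_fun_def Omega_def by blast
  then show ?thesis by blast
qed

lemma lift_disjoint:
  assumes "E \<subseteq> V \<times> V" "scc V E C" "scc V E D" "lift V E h C \<noteq> lift V E h D"
  shows "lift V E h C \<inter> lift V E h D = {}"
proof (rule ccontr)
  assume "lift V E h C \<inter> lift V E h D \<noteq> {}"
  then obtain f where "f \<in> lift V E h C" "f \<in> lift V E h D" by blast
  then have "f 0 \<in> C \<inter> D" unfolding lift_def by blast
  then show False using scc_eq[OF assms(1-3)] assms(4) by blast
qed

lemma finite_sccs: "finite V \<Longrightarrow> finite {C. scc V E C}"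
  by (rule finite_subset[of _ "Pow V"]) (auto simp: scc_def)

lemma limit_sets_in_lifts:
  assumes h: "h > 0" and fin: "finite V" and EV: "E \<subseteq> V \<times> V" and x: "x \<in> Delta V E h"
  obtains C D where "scc V E C" "alpha_lim V E h x \<subseteq> lift V E h C"
    and "scc V E D" "omega_lim V E h x \<subseteq> lift V E h D"
proof -
  obtain w c where w: "w \<in> Omega V E" and xw: "x = step_fun h w c" using x mem_Delta_iff[OF h] by blast
  obtain C where C: "scc V E C" "alpha_vertices w \<subseteq> C"
    using strongly_connected_set_in_scc[OF EV strongly_connected_alpha_vertices[OF fin w]] .
  obtain D where D: "scc V E D" "omega_vertices w \<subseteq> D"
    using strongly_connected_set_in_scc[OF EV strongly_connected_omega_vertices[OF fin w]] .
  have "alpha_lim V E h x \<subseteq> lift V E h C"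
    using alpha_lim_values[OF h] C(2) unfolding lift_def xw by blast
  moreover have "omega_lim V E h x \<subseteq> lift V E h D"
    using omega_lim_values[OF h] D(2) unfolding lift_def xw by blast
  ultimately show ?thesis using that C(1) D(1) by blast
qed

text \<open>The two components can only coincide if the whole path, squeezed between them, stays in one
  component, i.e. if the orbit lies in a lift.\<close>

lemma connecting_orbit:
  fixes V :: "'v set"
  assumes h: "h > 0" and fin: "finite V" and EV: "E \<subseteq> V \<times> V"
    and x: "x \<in> Delta V E h" and outside: "\<And>D. scc V E D \<Longrightarrow> x \<notin> lift V E h D"
    and C: "scc V E C" and D: "scc V E D"
    and alpha: "alpha_lim V E h x \<subseteq> lift V E h C" and omega: "omega_lim V E h x \<subseteq> lift V E h D"
  shows "C \<noteq> D" "reaches E C D"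
proof -
  obtain w c where w: "w \<in> Omega V E" and xw: "x = step_fun h w c" using x mem_Delta_iff[OF h] by blast
  obtain y where y: "y \<in> alpha_lim V E h x" using limit_sets_nonempty[OF h fin x] by blast
  obtain z where z: "z \<in> omega_lim V E h x" using limit_sets_nonempty[OF h fin x] by blast
  have yC: "y 0 \<in> C" using alpha y unfolding lift_def by blast
  have zD: "z 0 \<in> D" using omega z unfolding lift_def by blast
  have between: "(y 0, w k) \<in> E\<^sup>* \<and> (w k, z 0) \<in> E\<^sup>*" for k
  proof -
    obtain i where "i \<le> k" "w i = y 0"
      using alpha_lim_values(2)[OF h y[unfolded xw]] unfolding alpha_vertices_def by blast
    moreover obtain j where "k \<le> j" "w j = z 0"
      using omega_lim_values(2)[OF h z[unfolded xw]] unfolding omega_vertices_def by blast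
    ultimately show ?thesis using Omega_rtrancl[OF w] by metis
  qed
  then have "(y 0, z 0) \<in> E\<^sup>*" by (meson rtrancl_trans)
  then show "reaches E C D" unfolding reaches_def using yC zD by blast
  show "C \<noteq> D"
  proof
    assume "C = D"
    then have "w k \<in> C" for k using scc_path_closed[OF EV C yC] zD between by blast
    then have "x \<in> lift V E h C" using x unfolding lift_def xw step_fun_def by simp
    then show False using outside[OF C] by blast
  qed
qed

lemma lifts_no_cycle:
  fixes V :: "'v set" and l :: nat
  assumes h: "h > 0" and fin: "finite V" and EV: "E \<subseteq> V \<times> V"
    and l: "l \<ge> 1" and j: "\<forall>m\<le>l. j m \<in> {lift V E h C | C. scc V E C}"
    and x: "\<forall>m\<in>{1..l}. x m \<in> Delta V E h \<and> x m \<notin> \<Union>{lift V E h C | C. scc V E C} \<and>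
              alpha_lim V E h (x m) \<subseteq> j (m - 1) \<and> omega_lim V E h (x m) \<subseteq> j m"
  shows "j 0 \<noteq> j l"
proof
  assume cycle: "j 0 = j l"
  define D where "D m = (SOME D. scc V E D \<and> j m = lift V E h D)" for m
  have D: "scc V E (D m) \<and> j m = lift V E h (D m)" if "m \<le> l" for m
  proof -
    have "\<exists>D. scc V E D \<and> j m = lift V E h D" using j that by blast
    then show ?thesis unfolding D_def by (rule someI_ex)
  qed
  have "D (m - 1) \<noteq> D m \<and> reaches E (D (m - 1)) (D m)" if m: "1 \<le> m" "m \<le> l" for m
  proof -
    have xm: "x m \<in> Delta V E h" "x m \<notin> \<Union>{lift V E h C | C. scc V E C}"
      "alpha_lim V E h (x m) \<subseteq> j (m - 1)" "omega_lim V E h (x m) \<subseteq> j m"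
      using x m by auto
    have "x m \<notin> lift V E h C" if "scc V E C" for C using xm(2) that by blast
    moreover have "scc V E (D (m - 1))" "scc V E (D m)"
      "j (m - 1) = lift V E h (D (m - 1))" "j m = lift V E h (D m)"
      using D[of m] D[of "m - 1"] m by auto
    ultimately show ?thesis using connecting_orbit[OF h fin EV xm(1)] xm(3,4) by metis
  qed
  moreover have "D 0 = D l" unfolding D_def using cycle by simp
  ultimately show False using scc_chain_acyclic[OF EV l, of D] D by blast
qed

lemma Morse_set_lift:
  fixes V :: "'v set"
  assumes "h > 0" "finite V" "scc V E C"
  shows "lift V E h C \<noteq> {} \<and> lift V E h C \<subseteq> Delta V E h \<and> invariant (lift V E h C) \<and>
    isolated V E h (lift V E h C) \<and> compactin (flowtop V E h) (lift V E h C)"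
proof (intro conjI)
  show "lift V E h C \<subseteq> Delta V E h" unfolding lift_def by blast
  show "compactin (flowtop V E h) (lift V E h C)"
    using compactin_lift[OF assms(1) _ assms(2)] assms(3) unfolding scc_def by blast
qed (use assms lift_nonempty invariant_lift isolated_lift in auto)

theorem mainTheorem6:
  fixes V :: "'v set" and E :: "('v \<times> 'v) set" and h :: real
  assumes "finite V" and "E \<subseteq> V \<times> V" and "h > 0"
  shows "morse_decomposition V E h {lift V E h C | C. scc V E C}"
  unfolding morse_decomposition_def
proof (intro conjI)
  have "{lift V E h C | C. scc V E C} = lift V E h ` {C. scc V E C}" by blast
  then show "finite {lift V E h C | C. scc V E C}" using finite_sccs[OF assms(1)] by simp
  show "\<forall>K\<in>{lift V E h C | C. scc V E C}. K \<noteq> {} \<and> K \<subseteq> Delta V E h \<and> invariant K \<and>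
      isolated V E h K \<and> compactin (flowtop V E h) K"
    using Morse_set_lift[OF assms(3,1)] by blast
  show "\<forall>K\<in>{lift V E h C | C. scc V E C}. \<forall>K'\<in>{lift V E h C | C. scc V E C}. K \<noteq> K' \<longrightarrow> K \<inter> K' = {}"
    using lift_disjoint[OF assms(2)] by blast
  show "\<forall>x\<in>Delta V E h. omega_lim V E h x \<subseteq> \<Union>{lift V E h C | C. scc V E C} \<and>
      alpha_lim V E h x \<subseteq> \<Union>{lift V E h C | C. scc V E C}"
    using limit_sets_in_lifts[OF assms(3,1,2)] by (metis (mono_tags, lifting) Sup_upper2 mem_Collect_eq)
qed (use lifts_no_cycle[OF assms(3,1,2)] in blast)

end
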